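(* Let $k\geq 4$ be fixed. Then, as $n\to\infty$, \[ \frac{2n}{k}+O(1) \;\ge\; \mathrm{wsat}_k(n,B_k) \;\ge\; \frac{2n}{k+O(1)}, \] where the $O(1)$ terms denote quantities bounded in absolute value by constants independent of $n$. That is, there are constants $C_1, C_2$ (independent of $n$) such that for all sufficiently large $n$, $\frac{2n}{k+C_2}\le \mathrm{wsat}_k(n,B_k)\le \frac{2n}{k}+C_1$.
   Context: A $k$-uniform hypergraph $H$ has a vertex set $V(H)$ and a set $E(H)$ of $k$-element subsets of $V(H)$ (hyperedges). The bow tie $B_k$ is the $k$-uniform hypergraph with $2k-1$ vertices and two hyperedges sharing exactly one vertex; thus a $k$-uniform hypergraph contains a copy of $B_k$ iff two of its hyperedges intersect in exactly one vertex. A $k$-uniform hypergraph $H$ on $n$ vertices is $B_k$-semi-saturated if for every $k$-subset $e\subseteq V(H)$ with $e\notin E(H)$, adding $e$ creates a new copy of $B_k$ (containing $e$), i.e. there is a hyperedge $f\in E(H)$ with $|e\cap f|=1$; $H$ itself need not be $B_k$-free. The semi-saturation number $\mathrm{wsat}_k(n,B_k)$ is the minimum number of hyperedges of an $n$-vertex $k$-uniform $B_k$-semi-saturated hypergraph. *)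

theory Defs
  imports Complex_Main
begin

definition k_uniform :: "nat \<Rightarrow> 'a set \<Rightarrow> 'a set set \<Rightarrow> bool" where
  "k_uniform k V E \<longleftrightarrow> (\<forall>e\<in>E. e \<subseteq> V \<and> card e = k)"

definition bowtie_semisat :: "nat \<Rightarrow> 'a set \<Rightarrow> 'a set set \<Rightarrow> bool" where
  "bowtie_semisat k V E \<longleftrightarrow> k_uniform k V E \<and>
     (\<forall>e. e \<subseteq> V \<and> card e = k \<and> e \<notin> E \<longrightarrow> (\<exists>f\<in>E. card (e \<inter> f) = 1))"

text \<open>wsat_k(n, B_k): minimum number of edges of such a hypergraph on n vertices
  (vertex set {0..<n}; the set is nonempty since the complete k-uniform hypergraph qualifies).\<close>
definition wsat_bowtie :: "nat \<Rightarrow> nat \<Rightarrow> nat" where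
  "wsat_bowtie k n = (LEAST m. \<exists>E. bowtie_semisat k {..<n} E \<and> card E = m)"

end

theory Submission
  imports Defs "HOL-Combinatorics.Permutations"
begin

text \<open>
  Lower bound: the hyperedges of a \<open>B\<^sub>k\<close>-semi-saturated hypergraph cover all but fewer
  than \<open>k\<close> vertices, since \<open>k\<close> uncovered vertices would form a non-edge meeting no edge;
  hence \<open>n < k (|E| + 1)\<close>.

  Upper bound: in a \<open>k\<close>-regular graph \<open>G\<close> of girth greater than \<open>k\<close>, every nonempty set of
  at most \<open>k\<close> edges has a leaf, i.e. a vertex lying in exactly one of them. So the stars
  of \<open>G\<close>, viewed as \<open>k\<close>-sets of edges, form a \<open>k\<close>-uniform hypergraph on \<open>E(G)\<close> with
  \<open>2 |E(G)| / k\<close> hyperedges, in which every nonempty set of at most \<open>k\<close> vertices meets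
  some hyperedge in exactly one vertex. Taking disjoint copies of \<open>G\<close> and padding with fewer than
  \<open>|E(G)|\<close> further vertices, covered by their own complete \<open>k\<close>-uniform hypergraph, gives
  semi-saturated hypergraphs with \<open>2n/k + O(1)\<close> edges for every \<open>n\<close>.

  For \<open>G\<close> we take the Cayley graph of the symmetric group on the set \<open>W\<close> of words of
  length at most \<open>2k\<close> over \<open>k\<close> letters without two equal adjacent letters, with respect
  to the \<open>k\<close> involutions of \<open>W\<close> that delete a leading letter \<open>i\<close> or else prepend \<open>i\<close>. If
  \<open>h u = []\<close>, then along a walk from \<open>h\<close> that always leaves a vertex by an edge whose
  letter differs from the first letter of the current image of \<open>u\<close>, this image grows by
  one letter per step. A nonempty leafless set of at most \<open>k\<close> edges allows such a walk of
  length \<open>2k\<close>, so it would span more than \<open>2k\<close> vertices.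
\<close>

section \<open>Semi-saturated hypergraphs\<close>

definition hits_small_sets_once :: "nat \<Rightarrow> 'a set \<Rightarrow> 'a set set \<Rightarrow> bool" where
  "hits_small_sets_once k V E \<longleftrightarrow>
     (\<forall>S\<subseteq>V. S \<noteq> {} \<and> card S \<le> k \<longrightarrow> (\<exists>f\<in>E. card (S \<inter> f) = 1))"

lemma bowtie_semisat_complete: "bowtie_semisat k V {e. e \<subseteq> V \<and> card e = k}"
  by (auto simp: bowtie_semisat_def k_uniform_def)

lemma bowtie_semisat_Plus:
  assumes "0 < k" and F: "k_uniform k X F" "hits_small_sets_once k X F"
  shows "bowtie_semisat k (X <+> Y) ((`) Inl ` F \<union> {e. e \<subseteq> Inr ` Y \<and> card e = k})"
    (is "bowtie_semisat k _ ?E")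
  unfolding bowtie_semisat_def
proof (intro conjI allI impI)
  show "k_uniform k (X <+> Y) ?E"
    using F(1) by (auto simp: k_uniform_def card_image)
next
  fix e assume e: "e \<subseteq> X <+> Y \<and> card e = k \<and> e \<notin> ?E"
  define S where "S = Inl -` e"
  have "\<not> e \<subseteq> Inr ` Y"
    using e by auto
  then obtain a where "Inl a \<in> e"
    using e unfolding Plus_def by blast
  then have "S \<noteq> {}"
    by (auto simp: S_def)
  moreover have "S \<subseteq> X"
    using e by (auto simp: S_def)
  moreover have "card S \<le> k"
  proof -
    have "finite e"
      using e \<open>0 < k\<close> card_ge_0_finite by blast
    then have "card (Inl ` S :: ('a + 'b) set) \<le> card e"
      by (intro card_mono) (auto simp: S_def)
    then show ?thesis
      using e by (simp add: card_image)
  qed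
  ultimately obtain f where f: "f \<in> F" "card (S \<inter> f) = 1"
    using F(2) by (auto simp: hits_small_sets_once_def)
  have "e \<inter> Inl ` f = Inl ` (S \<inter> f)"
    by (auto simp: S_def)
  then have "card (e \<inter> Inl ` f) = 1"
    using f(2) by (simp add: card_image)
  then show "\<exists>f\<in>?E. card (e \<inter> f) = 1"
    using f(1) by blast
qed

lemma bowtie_semisat_image:
  assumes inj: "inj_on \<phi> V" and semisat: "bowtie_semisat k V E"
  shows "bowtie_semisat k (\<phi> ` V) ((`) \<phi> ` E)"
  unfolding bowtie_semisat_def
proof (intro conjI allI impI)
  have edges: "f \<subseteq> V \<and> card f = k" if "f \<in> E" for f
    using semisat that by (auto simp: bowtie_semisat_def k_uniform_def)
  then show "k_uniform k (\<phi> ` V) ((`) \<phi> ` E)"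
    using inj by (auto simp: k_uniform_def card_image inj_on_subset)
  fix e' assume e': "e' \<subseteq> \<phi> ` V \<and> card e' = k \<and> e' \<notin> (`) \<phi> ` E"
  define e where "e = V \<inter> \<phi> -` e'"
  have "e \<subseteq> V" and e'_eq: "e' = \<phi> ` e"
    using e' by (auto simp: e_def)
  then have "card e = k" "e \<notin> E"
    using e' inj by (auto simp: card_image inj_on_subset)
  then obtain f where f: "f \<in> E" "card (e \<inter> f) = 1"
    using semisat \<open>e \<subseteq> V\<close> by (auto simp: bowtie_semisat_def)
  have "e' \<inter> \<phi> ` f = \<phi> ` (e \<inter> f)"
    using inj_on_image_Int[OF inj \<open>e \<subseteq> V\<close>] edges[OF f(1)] e'_eq by simp
  also have "card \<dots> = 1"
    using f(2) inj_on_subset[OF inj] \<open>e \<subseteq> V\<close> by (metis card_image inf.coboundedI1)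
  finally show "\<exists>f'\<in>(`) \<phi> ` E. card (e' \<inter> f') = 1"
    using f(1) by blast
qed

lemma wsat_bowtie_le:
  assumes "finite V" "bowtie_semisat k V E"
  shows "wsat_bowtie k (card V) \<le> card E"
proof -
  obtain \<phi> where \<phi>: "bij_betw \<phi> V {..<card V}"
    using ex_bij_betw_finite_nat[OF assms(1)] atLeast0LessThan by metis
  have "finite E"
    using assms by (auto simp: bowtie_semisat_def k_uniform_def intro: finite_subset[of E "Pow V"])
  have "bowtie_semisat k {..<card V} ((`) \<phi> ` E)"
    using bowtie_semisat_image[OF bij_betw_imp_inj_on[OF \<phi>] assms(2)] bij_betw_imp_surj_on[OF \<phi>]
    by simp
  then have "wsat_bowtie k (card V) \<le> card ((`) \<phi> ` E)"
    unfolding wsat_bowtie_def by (blast intro: Least_le)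
  also have "\<dots> \<le> card E"
    using \<open>finite E\<close> by (rule card_image_le)
  finally show ?thesis .
qed

lemma bowtie_semisat_card_lt:
  assumes "finite V" "0 < k" and semisat: "bowtie_semisat k V E"
  shows "card V < k * card E + k"
proof (rule ccontr)
  assume "\<not> card V < k * card E + k"
  then have many: "k * card E + k \<le> card V"
    by simp
  have edges: "f \<subseteq> V \<and> card f = k" if "f \<in> E" for f
    using semisat that by (auto simp: bowtie_semisat_def k_uniform_def)
  have "card (\<Union>E) \<le> (\<Sum>f\<in>E. card f)"
    by (rule card_Union_le_sum_card)
  also have "\<dots> = k * card E"
    using edges by simp
  finally have "k \<le> card (V - \<Union>E)"
    using many edges assms(1) by (subst card_Diff_subset) (auto intro: finite_subset)
  then obtain e where e: "e \<subseteq> V - \<Union>E" "card e = k"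
    by (meson obtain_subset_with_card_n)
  then have "e \<noteq> {}" "e \<subseteq> V"
    using \<open>0 < k\<close> by auto
  with e have "e \<notin> E"
    by blast
  then obtain f where "f \<in> E" "card (e \<inter> f) = 1"
    using semisat e \<open>e \<subseteq> V\<close> by (auto simp: bowtie_semisat_def)
  moreover have "e \<inter> f = {}"
    using e \<open>f \<in> E\<close> by blast
  ultimately show False
    by simp
qed

lemma wsat_bowtie_attained: "\<exists>E. bowtie_semisat k {..<n} E \<and> card E = wsat_bowtie k n"
  unfolding wsat_bowtie_def by (rule LeastI_ex) (use bowtie_semisat_complete in blast)

lemma wsat_bowtie_lower:
  assumes "0 < k"
  shows "n < k * wsat_bowtie k n + k"
proof -
  obtain E where "bowtie_semisat k {..<n} E" "card E = wsat_bowtie k n"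
    using wsat_bowtie_attained by blast
  then show ?thesis
    using bowtie_semisat_card_lt[of "{..<n}" k E] assms by simp
qed

section \<open>A Cayley graph of large girth\<close>

definition edge_star :: "'a set set \<Rightarrow> 'a \<Rightarrow> 'a set set" where
  "edge_star X v = {x \<in> X. v \<in> x}"

lemma sum_card_edge_star:
  assumes "finite V" and "\<And>x. x \<in> X \<Longrightarrow> x \<subseteq> V \<and> card x = 2"
  shows "(\<Sum>v\<in>V. card (edge_star X v)) = 2 * card X"
proof -
  have "finite X"
    using assms by (meson Pow_iff finite_Pow_iff finite_subset subsetI)
  have "(\<Sum>v\<in>V. card (edge_star X v)) = (\<Sum>v\<in>V. \<Sum>x\<in>{x\<in>X. v \<in> x}. 1::nat)"
    by (simp add: edge_star_def)
  also have "\<dots> = (\<Sum>x\<in>X. \<Sum>v\<in>{v\<in>V. v \<in> x}. 1)"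
    by (rule sum.swap_restrict[OF \<open>finite V\<close> \<open>finite X\<close>])
  also have "\<dots> = (\<Sum>x\<in>X. 2)"
  proof (rule sum.cong)
    fix x assume "x \<in> X"
    then have "{v\<in>V. v \<in> x} = x" "card x = 2"
      using assms(2) by auto
    then show "(\<Sum>v\<in>{v\<in>V. v \<in> x}. 1) = (2::nat)" by simp
  qed simp
  finally show ?thesis by simp
qed

definition rwords :: "nat \<Rightarrow> nat \<Rightarrow> nat list set" where
  "rwords k R = {w. length w \<le> R \<and> set w \<subseteq> {..<k} \<and> successively (\<noteq>) w}"

definition toggle :: "nat \<Rightarrow> nat \<Rightarrow> nat \<Rightarrow> nat list \<Rightarrow> nat list" where
  "toggle k R i w =
     (if w \<notin> rwords k R then w
      else if w \<noteq> [] \<and> hd w = i then tl w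
      else if length w < R then i # w
      else w)"

lemma finite_rwords: "finite (rwords k R)"
proof -
  have "rwords k R \<subseteq> {w. set w \<subseteq> {..<k} \<and> length w \<le> R}"
    by (auto simp: rwords_def)
  then show ?thesis
    using finite_lists_length_le[of "{..<k}" R] finite_subset by blast
qed

lemma Nil_in_rwords: "[] \<in> rwords k R"
  by (simp add: rwords_def)

lemma tl_in_rwords: "w \<in> rwords k R \<Longrightarrow> tl w \<in> rwords k R"
  by (cases w) (auto simp: rwords_def successively_Cons)

lemma Cons_in_rwords:
  "\<lbrakk>w \<in> rwords k R; i < k; length w < R; w = [] \<or> hd w \<noteq> i\<rbrakk> \<Longrightarrow> i # w \<in> rwords k R"
  by (cases w) (auto simp: rwords_def successively_Cons)

lemma toggle_push:
  "\<lbrakk>w \<in> rwords k R; w = [] \<or> hd w \<noteq> i; length w < R\<rbrakk> \<Longrightarrow> toggle k R i w = i # w"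
  by (auto simp: toggle_def)

lemma toggle_toggle:
  assumes "i < k"
  shows "toggle k R i (toggle k R i w) = w"
proof (cases "w \<in> rwords k R \<and> w \<noteq> [] \<and> hd w = i")
  case True
  then have "tl w \<in> rwords k R" "length (tl w) < R" "tl w = [] \<or> hd (tl w) \<noteq> i"
    by (auto simp: tl_in_rwords rwords_def neq_Nil_conv successively_Cons)
  with True show ?thesis
    by (auto simp: toggle_def neq_Nil_conv)
next
  case False
  then show ?thesis
    using Cons_in_rwords[OF _ assms] by (auto simp: toggle_def)
qed

lemma toggle_permutes: "i < k \<Longrightarrow> toggle k R i permutes rwords k R"
  unfolding permutes_def by (metis toggle_def toggle_toggle)

type_synonym cay_vertex = "(nat list \<Rightarrow> nat list) \<times> nat"

text \<open>The second component numbers \<open>q\<close> disjoint copies of the Cayley graph.\<close>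

definition cay_vertices :: "nat \<Rightarrow> nat \<Rightarrow> nat \<Rightarrow> cay_vertex set" where
  "cay_vertices k R q = {h. h permutes rwords k R} \<times> {..<q}"

definition cay_step :: "nat \<Rightarrow> nat \<Rightarrow> nat \<Rightarrow> cay_vertex \<Rightarrow> cay_vertex" where
  "cay_step k R i v = (toggle k R i \<circ> fst v, snd v)"

definition cay_edge :: "nat \<Rightarrow> nat \<Rightarrow> nat \<Rightarrow> cay_vertex \<Rightarrow> cay_vertex set" where
  "cay_edge k R i v = {v, cay_step k R i v}"

definition cay_edges :: "nat \<Rightarrow> nat \<Rightarrow> nat \<Rightarrow> cay_vertex set set" where
  "cay_edges k R q = {cay_edge k R i v | i v. i < k \<and> v \<in> cay_vertices k R q}"

lemma finite_cay_vertices: "finite (cay_vertices k R q)"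
  using finite_permutations[OF finite_rwords] by (simp add: cay_vertices_def)

lemma finite_cay_edges: "finite (cay_edges k R q)"
proof -
  have "cay_edges k R q = (\<lambda>(i, v). cay_edge k R i v) ` ({..<k} \<times> cay_vertices k R q)"
    by (auto simp: cay_edges_def)
  then show ?thesis
    using finite_cay_vertices by simp
qed

lemma card_cay_vertices: "card (cay_vertices k R q) = card {h. h permutes rwords k R} * q"
  by (simp add: cay_vertices_def card_cartesian_product)

lemma card_cay_vertices_pos:
  assumes "0 < q"
  shows "0 < card (cay_vertices k R q)"
proof -
  have "(id, 0) \<in> cay_vertices k R q"
    using assms by (simp add: cay_vertices_def permutes_id)
  then show ?thesis
    using finite_cay_vertices card_gt_0_iff by blast
qed

lemma cay_step_in_vertices:
  "\<lbrakk>v \<in> cay_vertices k R q; i < k\<rbrakk> \<Longrightarrow> cay_step k R i v \<in> cay_vertices k R q"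
  by (auto simp: cay_vertices_def cay_step_def intro: permutes_compose toggle_permutes)

lemma cay_step_step: "i < k \<Longrightarrow> cay_step k R i (cay_step k R i v) = v"
  by (simp add: cay_step_def o_def toggle_toggle)

lemma cay_vertex_root:
  assumes "v \<in> cay_vertices k R q"
  obtains u where "u \<in> rwords k R" "fst v u = []"
proof -
  have perm: "fst v permutes rwords k R"
    using assms by (auto simp: cay_vertices_def)
  then obtain u where "fst v u = []"
    by (metis permutes_surj surjD)
  moreover have "u \<in> rwords k R"
    using permutes_in_image[OF perm, of u] calculation Nil_in_rwords by simp
  ultimately show thesis using that by blast
qed

lemma cay_step_root:
  "\<lbrakk>0 < R; fst v u = []\<rbrakk> \<Longrightarrow> fst (cay_step k R i v) u = [i]"
  by (simp add: cay_step_def toggle_push Nil_in_rwords)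

lemma cay_step_inj:
  assumes "0 < R" "v \<in> cay_vertices k R q" "cay_step k R i v = cay_step k R j v"
  shows "i = j"
  using assms cay_step_root[OF \<open>0 < R\<close>] by (metis cay_vertex_root list.inject)

lemma cay_step_neq:
  assumes "0 < R" "v \<in> cay_vertices k R q"
  shows "cay_step k R i v \<noteq> v"
  using assms cay_step_root[OF \<open>0 < R\<close>] by (metis cay_vertex_root list.distinct(1))

lemma cay_edges_subset: "x \<in> cay_edges k R q \<Longrightarrow> x \<subseteq> cay_vertices k R q"
  by (auto simp: cay_edges_def cay_edge_def cay_step_in_vertices)

lemma card_cay_edge:
  assumes "0 < R" "x \<in> cay_edges k R q"
  shows "card x = 2"
proof -
  obtain i v where "x = cay_edge k R i v" and v: "v \<in> cay_vertices k R q"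
    using assms(2) by (auto simp: cay_edges_def)
  then show ?thesis
    using cay_step_neq[OF assms(1) v, of i] by (metis card_2_iff cay_edge_def)
qed

lemma edge_star_cay_edges:
  assumes "v \<in> cay_vertices k R q"
  shows "edge_star (cay_edges k R q) v = (\<lambda>i. cay_edge k R i v) ` {..<k}"
proof (intro equalityI subsetI)
  fix x assume "x \<in> edge_star (cay_edges k R q) v"
  then obtain i w where x: "x = cay_edge k R i w" "i < k" "v \<in> x"
    by (auto simp: edge_star_def cay_edges_def)
  then have "x = cay_edge k R i v"
    using cay_step_step[OF \<open>i < k\<close>, where v = w] by (auto simp: cay_edge_def)
  with x show "x \<in> (\<lambda>i. cay_edge k R i v) ` {..<k}" by blast
next
  fix x assume "x \<in> (\<lambda>i. cay_edge k R i v) ` {..<k}"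
  with assms show "x \<in> edge_star (cay_edges k R q) v"
    unfolding edge_star_def cay_edges_def cay_edge_def by blast
qed

lemma card_edge_star_cay_edges:
  assumes "0 < R" "v \<in> cay_vertices k R q"
  shows "card (edge_star (cay_edges k R q) v) = k"
proof -
  have "inj_on (\<lambda>i. cay_edge k R i v) {..<k}"
    using cay_step_inj[OF assms] cay_step_neq[OF assms]
    by (intro inj_onI) (auto simp: cay_edge_def doubleton_eq_iff)
  then show ?thesis
    by (simp add: edge_star_cay_edges[OF assms(2)] card_image)
qed

lemma card_cay_edges:
  assumes "0 < R"
  shows "k * card (cay_vertices k R q) = 2 * card (cay_edges k R q)"
proof -
  have "k * card (cay_vertices k R q) = (\<Sum>v\<in>cay_vertices k R q. card (edge_star (cay_edges k R q) v))"
    using card_edge_star_cay_edges[OF assms] by simp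
  also have "\<dots> = 2 * card (cay_edges k R q)"
    using finite_cay_vertices cay_edges_subset card_cay_edge[OF assms]
    by (intro sum_card_edge_star) auto
  finally show ?thesis .
qed

lemma leafless_cay_subgraph_word_length:
  assumes e: "e \<subseteq> cay_edges k R q"
    and no_leaf: "\<And>v. card (edge_star e v) \<noteq> 1"
    and g: "g \<in> \<Union>e" "fst g u = []" and u: "u \<in> rwords k R"
    and "l \<le> R"
  shows "\<exists>v\<in>\<Union>e. length (fst v u) = l"
  using \<open>l \<le> R\<close>
proof (induction l)
  case 0
  with g show ?case by auto
next
  case (Suc l)
  then obtain v where v: "v \<in> \<Union>e" "length (fst v u) = l"
    by auto
  have vV: "v \<in> cay_vertices k R q"
    using v(1) e(1) cay_edges_subset by blast
  have "finite e"
    using e finite_cay_edges finite_subset by blast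
  then have fin: "finite (edge_star e v)" and "edge_star e v \<noteq> {}"
    using v(1) by (auto simp: edge_star_def)
  with no_leaf[of v] have "\<not> card (edge_star e v) \<le> Suc 0"
    by (simp add: le_Suc_eq)
  then obtain x y where xy: "x \<in> edge_star e v" "y \<in> edge_star e v" "x \<noteq> y"
    unfolding card_le_Suc0_iff_eq[OF fin] by blast
  moreover have "edge_star e v \<subseteq> (\<lambda>i. cay_edge k R i v) ` {..<k}"
    using e(1) edge_star_cay_edges[OF vV] by (auto simp: edge_star_def)
  ultimately obtain i j where ij: "x = cay_edge k R i v" "y = cay_edge k R j v" "i < k" "j < k"
    by blast
  define w where "w = fst v u"
  obtain a where a: "a < k" "cay_edge k R a v \<in> e" "w = [] \<or> hd w \<noteq> a"
  proof (cases "w = [] \<or> hd w \<noteq> i")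
    case True
    then show ?thesis
      using that[of i] xy(1) ij by (simp add: edge_star_def)
  next
    case False
    moreover have "i \<noteq> j"
      using xy(3) ij by auto
    ultimately show ?thesis
      using that[of j] xy(2) ij by (auto simp: edge_star_def)
  qed
  have "w \<in> rwords k R"
    using vV u permutes_in_image by (fastforce simp: w_def cay_vertices_def)
  then have "fst (cay_step k R a v) u = a # w"
    using Suc.prems v(2) a(3) by (simp add: cay_step_def w_def toggle_push)
  moreover have "cay_step k R a v \<in> \<Union>e"
    using a(2) by (auto simp: cay_edge_def)
  ultimately show ?case
    using v(2) w_def by (metis length_Cons)
qed

lemma cay_edges_leaf:
  assumes e: "e \<subseteq> cay_edges k R q" "e \<noteq> {}" and small: "2 * card e \<le> R"
  shows "\<exists>v. card (edge_star e v) = 1"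
proof (rule ccontr)
  assume "\<nexists>v. card (edge_star e v) = 1"
  then have no_leaf: "\<And>v. card (edge_star e v) \<noteq> 1" by blast
  have "finite e"
    using e(1) finite_cay_edges finite_subset by blast
  then have "0 < card e"
    using e(2) by (simp add: card_gt_0_iff)
  then have "0 < R"
    using small by linarith
  obtain x where "x \<in> e"
    using e(2) by blast
  moreover obtain i g where "x = cay_edge k R i g"
    using \<open>x \<in> e\<close> e(1) unfolding cay_edges_def by blast
  ultimately have g: "g \<in> \<Union>e"
    by (auto simp: cay_edge_def)
  then have "g \<in> cay_vertices k R q"
    using e(1) cay_edges_subset by blast
  then obtain u where u: "u \<in> rwords k R" "fst g u = []"
    by (rule cay_vertex_root)
  have fin: "finite (\<Union>e)"
    using \<open>finite e\<close> e(1) finite_cay_vertices cay_edges_subset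
    by (meson Union_least finite_subset subsetD)
  have "{0..R} \<subseteq> (\<lambda>v. length (fst v u)) ` \<Union>e"
    using leafless_cay_subgraph_word_length[OF e(1) no_leaf g u(2) u(1)] by force
  then have "card {0..R} \<le> card (\<Union>e)"
    by (meson card_image_le card_mono fin finite_imageI order.trans)
  also have "card (\<Union>e) \<le> (\<Sum>x\<in>e. card x)"
    by (rule card_Union_le_sum_card)
  also have "\<dots> = (\<Sum>x\<in>e. 2)"
    using e(1) card_cay_edge[OF \<open>0 < R\<close>, where k = k and q = q] by (intro sum.cong) auto
  also have "\<dots> = 2 * card e"
    by simp
  finally show False
    using small by simp
qed

lemma k_uniform_cay_stars:
  assumes "0 < R"
  shows "k_uniform k (cay_edges k R q) (edge_star (cay_edges k R q) ` cay_vertices k R q)"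
  using card_edge_star_cay_edges[OF assms] by (auto simp: k_uniform_def edge_star_def)

lemma hits_small_sets_once_cay_stars:
  assumes "2 * k \<le> R"
  shows "hits_small_sets_once k (cay_edges k R q) (edge_star (cay_edges k R q) ` cay_vertices k R q)"
  unfolding hits_small_sets_once_def
proof (intro allI impI)
  fix S assume S: "S \<subseteq> cay_edges k R q" "S \<noteq> {} \<and> card S \<le> k"
  moreover have "2 * card S \<le> R"
    using S assms by linarith
  ultimately obtain v where v: "card (edge_star S v) = 1"
    using cay_edges_leaf by blast
  then have "edge_star S v \<noteq> {}"
    by auto
  then obtain x where "x \<in> S" "v \<in> x"
    by (auto simp: edge_star_def)
  then have "v \<in> cay_vertices k R q"
    using S(1) cay_edges_subset by blast
  moreover have "S \<inter> edge_star (cay_edges k R q) v = edge_star S v"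
    using S(1) by (auto simp: edge_star_def)
  ultimately show "\<exists>f\<in>edge_star (cay_edges k R q) ` cay_vertices k R q. card (S \<inter> f) = 1"
    using v by (metis image_eqI)
qed

lemma wsat_bowtie_cay_padding:
  assumes "0 < k" "2 * k \<le> R"
  shows "wsat_bowtie k (card (cay_edges k R q) + r) \<le> card (cay_vertices k R q) + (r choose k)"
proof -
  let ?X = "cay_edges k R q" and ?V = "cay_vertices k R q"
  let ?E = "(`) Inl ` edge_star ?X ` ?V \<union> {e. e \<subseteq> Inr ` {..<r} \<and> card e = k}"
  have "0 < R"
    using assms by linarith
  then have "bowtie_semisat k (?X <+> {..<r}) ?E"
    using assms k_uniform_cay_stars hits_small_sets_once_cay_stars
    by (intro bowtie_semisat_Plus) auto
  then have "wsat_bowtie k (card (?X <+> {..<r})) \<le> card ?E"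
    using finite_cay_edges by (intro wsat_bowtie_le) auto
  also have "\<dots> \<le> card ?V + (r choose k)"
  proof (rule order_trans[OF card_Un_le add_mono])
    show "card ((`) Inl ` edge_star ?X ` ?V) \<le> card ?V"
      unfolding image_comp using finite_cay_vertices by (rule card_image_le)
    show "card {e. e \<subseteq> Inr ` {..<r} \<and> card e = k} \<le> r choose k"
      by (simp add: n_subsets card_image)
  qed
  finally show ?thesis
    using finite_cay_edges by (simp add: card_Plus)
qed

lemma wsat_bowtie_upper:
  assumes "0 < k"
  shows "\<exists>C. \<forall>n. real (wsat_bowtie k n) \<le> 2 * real n / real k + C"
proof -
  define R where "R = 2 * k"
  define D where "D = card (cay_edges k R 1)"
  have "0 < R"
    using assms by (simp add: R_def)
  have degree_sum: "k * card (cay_vertices k R q) = 2 * D * q" for q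
    using card_cay_edges[OF \<open>0 < R\<close>, of k 1] card_cay_vertices[of k R q] card_cay_vertices[of k R 1]
    by (simp add: D_def)
  then have card_edges: "card (cay_edges k R q) = D * q" for q
    using card_cay_edges[OF \<open>0 < R\<close>, of k q] by simp
  have "0 < D"
    using degree_sum[of 1] assms card_cay_vertices_pos[of 1 k R]
    by (metis mult_pos_pos nat_0_less_mult_iff zero_less_one mult_1_right)
  have "real (wsat_bowtie k n) \<le> 2 * real n / real k + 2 ^ D" for n
  proof -
    define q r where "q = n div D" and "r = n mod D"
    have wsat_le: "wsat_bowtie k n \<le> card (cay_vertices k R q) + (r choose k)"
      using wsat_bowtie_cay_padding[OF assms, of R q r] card_edges[of q]
      by (simp add: R_def q_def r_def)
    have vertices_le: "k * card (cay_vertices k R q) \<le> 2 * n"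
      using degree_sum[of q] by (simp add: q_def)
    have choose_le: "r choose k \<le> 2 ^ D"
    proof -
      have "(2::nat) ^ r \<le> 2 ^ D"
        using \<open>0 < D\<close> by (simp add: r_def)
      then show ?thesis
        using binomial_le_pow2[of r k] by linarith
    qed
    have "k * wsat_bowtie k n \<le> k * (card (cay_vertices k R q) + (r choose k))"
      using wsat_le by (rule mult_le_mono2)
    also have "\<dots> \<le> 2 * n + k * 2 ^ D"
      unfolding add_mult_distrib2 using vertices_le choose_le by (intro add_mono mult_le_mono2)
    finally have "real (k * wsat_bowtie k n) \<le> real (2 * n + k * 2 ^ D)"
      by (rule of_nat_mono)
    then show ?thesis
      using assms by (simp add: field_simps)
  qed
  then show ?thesis
    by blast
qed

theorem proposition2p1:
  fixes k :: nat
  assumes "k \<ge> 4"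
  shows "\<exists>C1 C2 :: real. real k + C2 > 0 \<and> (\<exists>N. \<forall>n\<ge>N.
           2 * real n / (real k + C2) \<le> real (wsat_bowtie k n) \<and>
           real (wsat_bowtie k n) \<le> 2 * real n / real k + C1)"
proof -
  have "0 < k"
    using assms by simp
  obtain C where upper: "\<And>n. real (wsat_bowtie k n) \<le> 2 * real n / real k + C"
    using wsat_bowtie_upper[OF \<open>0 < k\<close>] by blast
  have lower: "2 * real n / (real k + 2 * real k) \<le> real (wsat_bowtie k n)" if "3 * k \<le> n" for n
  proof -
    have "real n < real k * real (wsat_bowtie k n) + real k"
      using wsat_bowtie_lower[OF \<open>0 < k\<close>, of n] by (metis of_nat_add of_nat_less_iff of_nat_mult)
    moreover have "3 * real k \<le> real n"
      using that by simp
    ultimately show ?thesis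
      using \<open>0 < k\<close> by (simp add: divide_le_eq algebra_simps)
  qed
  show ?thesis
    using \<open>0 < k\<close> upper lower by (intro exI[of _ C] exI[of _ "2 * real k"]) auto
qed

end
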